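(* Let $\mathrm{B}:2^{<\omega}\times 2^{<\omega}\to\mathbb{N}$ satisfy: (1) $\mathrm{B}(x|y)$ is upper semi-computable uniformly in $x,y$; (2) there is a constant $c$ such that $\mathrm{B}(x|y)\le |x|+c$ for all $x,y\in 2^{<\omega}$; (3) there is a constant $d$, independent of $y$, such that $|\{x : \mathrm{B}(x|y)\le n\}|\le d\cdot 2^n$ for all $y\in 2^{<\omega}$ and $n\in\mathbb{N}$; (4) there is a constant $e$ such that $\mathrm{B}(\langle x,y\rangle|y)\le \mathrm{B}(x|y)+e$ for all $x,y$; (5) for every partial computable function $f:2^{<\omega}\to 2^{<\omega}$ there is a constant $c_f$ such that $\mathrm{B}(f(x)|y)\le \mathrm{B}(x|y)+c_f$ for all $y$ and all $x$ in the domain of $f$. Then there is a constant $c'$ such that $|\mathrm{B}(x|y)-\mathrm{C}(x|y)|\le c'$ for all $x,y\in 2^{<\omega}$.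
   Context: $2^{<\omega}$ is the set of finite binary strings; $|x|$ is the length of $x$; $\langle\cdot,\cdot\rangle$ is a fixed computable pairing function on strings. For a machine $T$, the conditional complexity is $\mathrm{C}_T(x|y)=\min\{|z| : T(\langle z,y\rangle)=x\}$. Fix an optimal machine $\mathbb{U}$ (for every machine $T$ there is $c_T$ with $\mathrm{C}_{\mathbb{U}}(x|y)\le \mathrm{C}_T(x|y)+c_T$ for all $x,y$) and set $\mathrm{C}(x|y)=\mathrm{C}_{\mathbb{U}}(x|y)$. Upper semi-computable uniformly in $x,y$ means the predicate "$\mathrm{B}(x|y)\le k$" is computably enumerable uniformly in $x,y,k$. *)

theory Defs
  imports Main "HOL-Library.Nat_Bijection"
begin

datatype recf =
    Zero
  | Succ
  | Proj nat
  | Comp recf "recf list"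
  | Prec recf recf
  | Minim recf

inductive eval :: "recf \<Rightarrow> nat list \<Rightarrow> nat \<Rightarrow> bool" where
  eval_Zero: "eval Zero xs 0"
| eval_Succ: "eval Succ (x # xs) (Suc x)"
| eval_Proj: "i < length xs \<Longrightarrow> eval (Proj i) xs (xs ! i)"
| eval_Comp: "list_all2 (\<lambda>g w. eval g xs w) gs ws \<Longrightarrow> eval f ws v \<Longrightarrow> eval (Comp f gs) xs v"
| eval_Prec0: "eval f xs v \<Longrightarrow> eval (Prec f g) (0 # xs) v"
| eval_PrecS: "eval (Prec f g) (n # xs) u \<Longrightarrow> eval g (n # u # xs) v
                 \<Longrightarrow> eval (Prec f g) (Suc n # xs) v"
| eval_Minim: "eval f (n # xs) 0 \<Longrightarrow> (\<forall>m<n. \<exists>w. eval f (m # xs) w \<and> w > 0)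
                 \<Longrightarrow> eval (Minim f) xs n"

type_synonym bits = "bool list"

text \<open>Bijective base-2 coding of finite binary strings as natural numbers.\<close>
fun enc :: "bits \<Rightarrow> nat" where
  "enc [] = 0"
| "enc (b # xs) = 2 * enc xs + (if b then 2 else 1)"

definition spair :: "bits \<Rightarrow> bits \<Rightarrow> bits" where
  "spair x y = concat (map (\<lambda>b. [b, b]) x) @ [False, True] @ y"

definition partial_computable :: "(bits \<Rightarrow> bits option) \<Rightarrow> bool" where
  "partial_computable f \<longleftrightarrow>
     (\<exists>p. \<forall>x v. eval p [enc x] v \<longleftrightarrow> (\<exists>z. f x = Some z \<and> v = enc z))"

definition ce :: "nat set \<Rightarrow> bool" where
  "ce A \<longleftrightarrow> (\<exists>p. \<forall>n. n \<in> A \<longleftrightarrow> (\<exists>v. eval p [n] v))"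

text \<open>Upper semi-computability uniformly in x, y: the predicate B(x|y) <= k
  is c.e. uniformly in x, y, k (coded via the computable Cantor pairing).\<close>
definition upper_semicomputable :: "(bits \<Rightarrow> bits \<Rightarrow> nat) \<Rightarrow> bool" where
  "upper_semicomputable B \<longleftrightarrow>
     ce {prod_encode (enc x, prod_encode (enc y, k)) | x y k. B x y \<le> k}"

text \<open>C_T(x|y) = min { |z| : T(<z,y>) = x } (only meaningful when the set is nonempty).\<close>
definition condC :: "(bits \<Rightarrow> bits option) \<Rightarrow> bits \<Rightarrow> bits \<Rightarrow> nat" where
  "condC T x y = (LEAST n. \<exists>z. T (spair z y) = Some x \<and> length z = n)"

text \<open>Optimal machine: a machine U such that for every machine T there is c_T
  with C_U(x|y) <= C_T(x|y) + c_T for all x, y (with C_T(x|y) = infinity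
  when x has no T-description relative to y).\<close>
definition optimal_machine :: "(bits \<Rightarrow> bits option) \<Rightarrow> bool" where
  "optimal_machine U \<longleftrightarrow> partial_computable U \<and>
     (\<forall>T. partial_computable T \<longrightarrow> (\<exists>c::nat. \<forall>x y z. T (spair z y) = Some x \<longrightarrow>
        (\<exists>z'. U (spair z' y) = Some x \<and> length z' \<le> length z + c)))"

end

theory Submission
  imports Defs
begin

text \<open>
  \<open>B \<le> C + O(1)\<close>: if \<open>z\<close> is a shortest \<open>U\<close>-description of \<open>x\<close> relative to \<open>y\<close>, then \<open>x\<close>
  is computed from \<open>\<langle>z, y\<rangle>\<close> by \<open>U\<close>, so
  \<open>B(x|y) \<le> B(\<langle>z,y\<rangle>|y) + c\<^sub>U \<le> B(z|y) + e + c\<^sub>U \<le> |z| + c + e + c\<^sub>U\<close>.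

  \<open>C \<le> B + O(1)\<close>: since \<open>B\<close> is upper semi-computable, \<open>{x. B(x|y) \<le> n}\<close> is enumerable uniformly
  in \<open>y\<close> and \<open>n\<close>, and it has at most \<open>d 2\<^sup>n \<le> 2\<^bsup>n+d\<^esup>\<close> elements. So \<open>x\<close> is determined
  by \<open>y\<close> and its position in the enumeration, written in binary as a string \<open>z\<close> of length
  \<open>n + d\<close>, from which \<open>n = |z| - d\<close> is recovered. The machine mapping \<open>\<langle>z, y\<rangle>\<close> to that
  element is simulated by \<open>U\<close>, giving \<open>C(x|y) \<le> B(x|y) + d + O(1)\<close>. Running the enumeration
  requires a clocked evaluator for arbitrary programs which is itself a total recursive function.
\<close>

section \<open>Total computable functions\<close>

definition computes :: "nat \<Rightarrow> recf \<Rightarrow> (nat list \<Rightarrow> nat) \<Rightarrow> bool" where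
  "computes k f F \<longleftrightarrow> (\<forall>xs. length xs = k \<longrightarrow> eval f xs (F xs))"

definition computable :: "nat \<Rightarrow> (nat list \<Rightarrow> nat) \<Rightarrow> bool" where
  "computable k F \<longleftrightarrow> (\<exists>f. computes k f F)"

lemma computable_cong:
  "computable k F \<Longrightarrow> (\<And>xs. length xs = k \<Longrightarrow> F xs = G xs) \<Longrightarrow> computable k G"
  unfolding computable_def computes_def by metis

lemma computable_zero: "computable k (\<lambda>_. 0)"
  unfolding computable_def computes_def by (auto intro: eval.intros)

lemma computable_nth: "i < k \<Longrightarrow> computable k (\<lambda>xs. xs ! i)"
  unfolding computable_def computes_def by (auto intro: eval.intros)

lemma computes_list_exists:
  "\<forall>F\<in>set Fs. computable k F \<Longrightarrow> \<exists>gs. list_all2 (\<lambda>g F. computes k g F) gs Fs"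
proof (induction Fs)
  case (Cons F Fs)
  then obtain gs where "list_all2 (\<lambda>g F. computes k g F) gs Fs" by auto
  moreover obtain g where "computes k g F" using Cons.prems computable_def by auto
  ultimately show ?case by (intro exI[of _ "g # gs"]) auto
qed simp

lemma computable_comp:
  assumes "computable m H" "length Fs = m" "\<forall>F\<in>set Fs. computable k F"
  shows "computable k (\<lambda>xs. H (map (\<lambda>F. F xs) Fs))"
proof -
  obtain h where h: "computes m h H" using assms(1) computable_def by auto
  obtain gs where gs: "list_all2 (\<lambda>g F. computes k g F) gs Fs"
    using computes_list_exists assms(3) by blast
  have "eval (Comp h gs) xs (H (map (\<lambda>F. F xs) Fs))" if "length xs = k" for xs
  proof (rule eval_Comp)
    show "list_all2 (\<lambda>g w. eval g xs w) gs (map (\<lambda>F. F xs) Fs)"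
      using gs that unfolding computes_def list_all2_map2 by (auto elim: list_all2_mono)
    show "eval h (map (\<lambda>F. F xs) Fs) (H (map (\<lambda>F. F xs) Fs))"
      using h assms(2) unfolding computes_def by auto
  qed
  then show ?thesis unfolding computable_def computes_def by blast
qed

lemma computable_comp1: "computable 1 H \<Longrightarrow> computable k F \<Longrightarrow> computable k (\<lambda>xs. H [F xs])"
  using computable_comp[of 1 H "[F]" k] by auto

lemma computable_comp2:
  "computable 2 H \<Longrightarrow> computable k F \<Longrightarrow> computable k G \<Longrightarrow> computable k (\<lambda>xs. H [F xs, G xs])"
  using computable_comp[of 2 H "[F,G]" k] by auto

lemma computable_select:
  assumes "computable (length is) F" "\<forall>i\<in>set is. i < k"
  shows "computable k (\<lambda>xs. F (map (\<lambda>i. xs ! i) is))"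
proof -
  have "computable k (\<lambda>xs. F (map (\<lambda>H. H xs) (map (\<lambda>i xs. xs ! i) is)))"
    by (rule computable_comp[OF assms(1)]) (use assms(2) computable_nth in auto)
  then show ?thesis by (simp add: o_def)
qed

lemma map_nth_upt_drop: "length xs = k \<Longrightarrow> map (\<lambda>i. xs ! i) [a..<k] = drop a xs"
  by (rule nth_equalityI) auto

lemma computable_drop:
  assumes "computable k F"
  shows "computable (a + k) (\<lambda>ys. F (drop a ys))"
proof -
  have "computable (a + k) (\<lambda>ys. F (map (\<lambda>i. ys ! i) [a..<a + k]))"
    by (rule computable_select) (use assms in auto)
  then show ?thesis by (rule computable_cong) (simp del: upt_Suc add: map_nth_upt_drop)
qed

lemma computable_tl: "computable k F \<Longrightarrow> computable (Suc k) (\<lambda>ys. F (tl ys))"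
  using computable_drop[of k F 1] by (simp add: drop_Suc)

lemma computable_drop2: "computable k F \<Longrightarrow> computable (Suc (Suc k)) (\<lambda>ys. F (drop 2 ys))"
  using computable_drop[of k F 2] by simp

lemma computable_hd: "computable (Suc k) hd"
  by (rule computable_cong[OF computable_nth[of 0 "Suc k"]]) (auto simp: length_Suc_conv)

lemma computable_Suc: "computable k F \<Longrightarrow> computable k (\<lambda>xs. Suc (F xs))"
proof -
  assume F: "computable k F"
  have "computable 1 (\<lambda>xs. Suc (xs ! 0))" unfolding computable_def computes_def
    by (rule exI[of _ Succ]) (auto simp: length_Suc_conv intro: eval.intros)
  from computable_comp1[OF this F] show ?thesis by simp
qed

lemma computable_const: "computable k (\<lambda>_. c)"
  by (induction c) (auto intro: computable_zero computable_Suc)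

primrec prim_rec :: "(nat list \<Rightarrow> nat) \<Rightarrow> (nat list \<Rightarrow> nat) \<Rightarrow> nat \<Rightarrow> nat list \<Rightarrow> nat" where
  "prim_rec F G 0 ys = F ys"
| "prim_rec F G (Suc n) ys = G (n # prim_rec F G n ys # ys)"

lemma computable_prim_rec:
  assumes "computable k F" "computable (Suc (Suc k)) G"
  shows "computable (Suc k) (\<lambda>xs. prim_rec F G (hd xs) (tl xs))"
proof -
  obtain f g where f: "computes k f F" and g: "computes (Suc (Suc k)) g G"
    using assms computable_def by auto
  have "eval (Prec f g) (n # ys) (prim_rec F G n ys)" if "length ys = k" for n ys
    using that f g unfolding computes_def by (induction n) (auto intro: eval.intros)
  then show ?thesis unfolding computable_def computes_def
    by (intro exI[of _ "Prec f g"]) (auto simp: length_Suc_conv)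
qed

lemma computable_prim_rec_on:
  assumes "computable k F" "computable (Suc (Suc k)) G" "computable k N"
  shows "computable k (\<lambda>xs. prim_rec F G (N xs) xs)"
proof -
  have "computable k (\<lambda>xs. (\<lambda>zs. prim_rec F G (hd zs) (tl zs))
      (map (\<lambda>H. H xs) (N # map (\<lambda>i xs. xs ! i) [0..<k])))"
    by (rule computable_comp[OF computable_prim_rec[OF assms(1,2)]])
      (use assms(3) computable_nth in auto)
  then show ?thesis
    by (rule computable_cong) (simp del: upt_Suc add: o_def map_nth_upt_drop)
qed

lemma computable_add: "computable k F \<Longrightarrow> computable k G \<Longrightarrow> computable k (\<lambda>xs. F xs + G xs)"
proof -
  assume FG: "computable k F" "computable k G"
  have step: "computable (Suc (Suc k)) (\<lambda>ys. Suc (ys ! 1))"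
    by (intro computable_Suc computable_nth) simp
  have "prim_rec G (\<lambda>ys. Suc (ys ! 1)) n xs = n + G xs" for n xs by (induction n) auto
  with computable_prim_rec_on[OF FG(2) step FG(1)] show ?thesis by simp
qed

lemma computable_double: "computable k F \<Longrightarrow> computable k (\<lambda>xs. 2 * F xs)"
  using computable_add[of k F F] by (simp add: mult_2)

lemma computable_pred: "computable 1 (\<lambda>xs. xs ! 0 - 1)"
proof -
  have "computable (Suc 0) (\<lambda>xs. prim_rec (\<lambda>_. 0) (\<lambda>ys. ys ! 0) (hd xs) (tl xs))"
    by (rule computable_prim_rec) (auto intro: computable_zero computable_nth)
  moreover have "prim_rec (\<lambda>_. 0) (\<lambda>ys. ys ! 0) n xs = n - 1" for n xs by (induction n) auto
  ultimately have "computable (Suc 0) (\<lambda>xs. xs ! 0 - 1)"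
    by (elim computable_cong) (auto simp: length_Suc_conv)
  then show ?thesis by simp
qed

lemma computable_diff: "computable k F \<Longrightarrow> computable k G \<Longrightarrow> computable k (\<lambda>xs. F xs - G xs)"
proof -
  assume FG: "computable k F" "computable k G"
  have step: "computable (Suc (Suc k)) (\<lambda>ys. ys ! 1 - 1)"
    using computable_comp1[OF computable_pred computable_nth[of 1 "Suc (Suc k)"]] by simp
  have "prim_rec F (\<lambda>ys. ys ! 1 - 1) n xs = F xs - n" for n xs by (induction n) auto
  with computable_prim_rec_on[OF FG(1) step FG(2)] show ?thesis by simp
qed

lemma computable_mult: "computable k F \<Longrightarrow> computable k G \<Longrightarrow> computable k (\<lambda>xs. F xs * G xs)"
proof -
  assume FG: "computable k F" "computable k G"
  have step: "computable (Suc (Suc k)) (\<lambda>ys. ys ! 1 + G (drop 2 ys))"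
    by (intro computable_add computable_nth computable_drop2 FG) simp
  have "prim_rec (\<lambda>_. 0) (\<lambda>ys. ys ! 1 + G (drop 2 ys)) n xs = n * G xs" for n xs
    by (induction n) auto
  with computable_prim_rec_on[OF computable_zero step FG(1)] show ?thesis by simp
qed

lemma computable_if:
  "computable k C \<Longrightarrow> computable k F \<Longrightarrow> computable k G \<Longrightarrow>
    computable k (\<lambda>xs. if C xs = 0 then F xs else G xs)"
proof -
  assume CFG: "computable k C" "computable k F" "computable k G"
  have "prim_rec F (\<lambda>ys. G (drop 2 ys)) n xs = (if n = 0 then F xs else G xs)" for n xs
    by (cases n) auto
  with computable_prim_rec_on[OF CFG(2) computable_drop2[OF CFG(3)] CFG(1)] show ?thesis by simp
qed

lemma computable_if_eq:
  "computable k A \<Longrightarrow> computable k A' \<Longrightarrow> computable k F \<Longrightarrow> computable k G \<Longrightarrow>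
    computable k (\<lambda>xs. if A xs = A' xs then F xs else G xs)"
proof -
  assume "computable k A" "computable k A'" "computable k F" "computable k G"
  then have "computable k (\<lambda>xs. if (A xs - A' xs) + (A' xs - A xs) = 0 then F xs else G xs)"
    by (intro computable_if computable_add computable_diff)
  then show ?thesis by (rule computable_cong) auto
qed

lemma computable_if_le:
  "computable k A \<Longrightarrow> computable k A' \<Longrightarrow> computable k F \<Longrightarrow> computable k G \<Longrightarrow>
    computable k (\<lambda>xs. if A xs \<le> A' xs then F xs else G xs)"
proof -
  assume "computable k A" "computable k A'" "computable k F" "computable k G"
  then have "computable k (\<lambda>xs. if A xs - A' xs = 0 then F xs else G xs)"
    by (intro computable_if computable_diff)
  then show ?thesis by (rule computable_cong) auto
qed

lemma computable_of_bool_eq: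
  assumes "computable k A" "computable k A'"
  shows "computable k (\<lambda>xs. of_bool (A xs = A' xs))"
proof -
  have "computable k (\<lambda>xs. if A xs = A' xs then 1 else 0)"
    by (intro computable_if_eq assms computable_const)
  then show ?thesis by (rule computable_cong) simp
qed

lemma computable_mod2: "computable k F \<Longrightarrow> computable k (\<lambda>xs. F xs mod 2)"
proof -
  assume F: "computable k F"
  have step: "computable (Suc (Suc k)) (\<lambda>ys. 1 - ys ! 1)"
    by (intro computable_diff computable_const computable_nth) simp
  have "prim_rec (\<lambda>_. 0) (\<lambda>ys. 1 - ys ! 1) n xs = n mod 2" for n xs
    by (induction n) (auto simp: mod_Suc)
  with computable_prim_rec_on[OF computable_zero step F] show ?thesis by simp
qed

lemma computable_div2: "computable k F \<Longrightarrow> computable k (\<lambda>xs. F xs div 2)"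
proof -
  assume F: "computable k F"
  have step: "computable (Suc (Suc k)) (\<lambda>ys. ys ! 1 + ys ! 0 mod 2)"
    by (intro computable_add computable_mod2 computable_nth) simp_all
  have "prim_rec (\<lambda>_. 0) (\<lambda>ys. ys ! 1 + ys ! 0 mod 2) n xs = n div 2" for n xs
    by (induction n) (simp_all, presburger)
  with computable_prim_rec_on[OF computable_zero step F] show ?thesis by simp
qed

lemma computable_power2: "computable k F \<Longrightarrow> computable k (\<lambda>xs. 2 ^ F xs)"
proof -
  assume F: "computable k F"
  have step: "computable (Suc (Suc k)) (\<lambda>ys. ys ! 1 + ys ! 1)"
    by (intro computable_add computable_nth) simp_all
  have "prim_rec (\<lambda>_. 1) (\<lambda>ys. ys ! 1 + ys ! 1) n xs = 2 ^ n" for n xs by (induction n) auto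
  with computable_prim_rec_on[OF computable_const[of k 1] step F] show ?thesis by simp
qed

lemma computable_shift:
  "computable (Suc k) F \<Longrightarrow> computable (Suc (Suc k)) (\<lambda>ys. F (ys ! 0 # drop 2 ys))"
proof -
  assume F: "computable (Suc k) F"
  have "computable (Suc (Suc k)) (\<lambda>ys. F (map (\<lambda>i. ys ! i) (0 # [2..<Suc (Suc k)])))"
    by (rule computable_select) (use F in \<open>simp_all del: upt_Suc\<close>)
  then show ?thesis by (rule computable_cong) (simp del: upt_Suc add: map_nth_upt_drop)
qed

lemma computable_sum:
  "computable (Suc k) F \<Longrightarrow> computable k N \<Longrightarrow> computable k (\<lambda>xs. \<Sum>i<N xs. F (i # xs))"
proof -
  assume FN: "computable (Suc k) F" "computable k N"
  have step: "computable (Suc (Suc k)) (\<lambda>ys. ys ! 1 + F (ys ! 0 # drop 2 ys))"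
    by (intro computable_add computable_nth computable_shift FN) simp
  have "prim_rec (\<lambda>_. 0) (\<lambda>ys. ys ! 1 + F (ys ! 0 # drop 2 ys)) n xs = (\<Sum>i<n. F (i # xs))"
    for n xs
    by (induction n) auto
  with computable_prim_rec_on[OF computable_zero step FN(2)] show ?thesis by simp
qed

lemma computable_bounded_ex:
  assumes "computable (Suc k) Q" "computable k N"
  shows "computable k (\<lambda>xs. of_bool (\<exists>i<N xs. Q (i # xs) \<noteq> 0))"
proof -
  have "computable k (\<lambda>xs. if (\<Sum>i<N xs. Q (i # xs)) = 0 then 0 else 1)"
    by (intro computable_if computable_sum assms computable_const)
  then show ?thesis by (rule computable_cong) auto
qed

primrec bounded_least :: "(nat \<Rightarrow> bool) \<Rightarrow> nat \<Rightarrow> nat" where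
  "bounded_least P 0 = 0"
| "bounded_least P (Suc n) = (if bounded_least P n = n \<and> \<not> P n then Suc n else bounded_least P n)"

lemma bounded_least_eq: "bounded_least P n = (if \<exists>j<n. P j then (LEAST j. P j) else n)"
proof (induction n)
  case (Suc n)
  show ?case
  proof (cases "\<exists>j<n. P j")
    case True
    then have "(LEAST j. P j) < n" by (meson Least_le le_less_trans)
    with True Suc show ?thesis by (auto simp: less_Suc_eq)
  next
    case False
    then have "(LEAST j. P j) = n" if "P n"
      using that by (intro Least_equality) (auto simp: not_less[symmetric])
    with False Suc show ?thesis by (auto simp: less_Suc_eq)
  qed
qed simp

lemma computable_bounded_least:
  assumes "computable (Suc k) Q" "computable k N"
  shows "computable k (\<lambda>xs. bounded_least (\<lambda>j. Q (j # xs) \<noteq> 0) (N xs))"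
proof -
  define G where "G ys = (if ys ! 1 = ys ! 0 then (if Q (ys ! 0 # drop 2 ys) = 0 then Suc (ys ! 0)
    else ys ! 1) else ys ! 1)" for ys
  have step: "computable (Suc (Suc k)) G" unfolding G_def
    by (intro computable_if_eq computable_if computable_nth computable_Suc computable_shift assms)
      simp_all
  have "prim_rec (\<lambda>_. 0) G n xs = bounded_least (\<lambda>j. Q (j # xs) \<noteq> 0) n" for n xs
    by (induction n) (auto simp: G_def)
  with computable_prim_rec_on[OF computable_zero step assms(2)] show ?thesis by simp
qed

lemma computable_prod_encode:
  "computable k F \<Longrightarrow> computable k G \<Longrightarrow> computable k (\<lambda>xs. prod_encode (F xs, G xs))"
proof -
  assume "computable k F" "computable k G"
  then have "computable k (\<lambda>xs. (F xs + G xs) * Suc (F xs + G xs) div 2 + F xs)"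
    by (intro computable_add computable_div2 computable_mult computable_Suc)
  then show ?thesis by (simp add: prod_encode_def triangle_def)
qed

lemma prod_decode_bounded_least:
  "fst (prod_decode m) = bounded_least (\<lambda>a. \<exists>b<Suc m. prod_encode (a, b) = m) (Suc m)"
  "snd (prod_decode m) = bounded_least (\<lambda>b. \<exists>a<Suc m. prod_encode (a, b) = m) (Suc m)"
proof -
  obtain a b where ab: "prod_decode m = (a, b)" by force
  then have m: "m = prod_encode (a, b)" using prod_decode_inverse[of m] by simp
  have bounds: "a < Suc m" "b < Suc m"
    using m le_prod_encode_1 le_prod_encode_2 by (simp_all add: le_imp_less_Suc)
  have "(\<exists>b'<Suc m. prod_encode (a', b') = m) \<longleftrightarrow> a' = a" for a'
    using m bounds by auto
  then show "fst (prod_decode m) = bounded_least (\<lambda>a. \<exists>b<Suc m. prod_encode (a, b) = m) (Suc m)"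
    using ab bounds by (auto simp: bounded_least_eq intro: Least_equality[symmetric])
  have "(\<exists>a'<Suc m. prod_encode (a', b') = m) \<longleftrightarrow> b' = b" for b'
    using m bounds by auto
  then show "snd (prod_decode m) = bounded_least (\<lambda>b. \<exists>a<Suc m. prod_encode (a, b) = m) (Suc m)"
    using ab bounds by (auto simp: bounded_least_eq intro: Least_equality[symmetric])
qed

lemma computable_bounded_least_ex:
  assumes "computable (Suc (Suc k)) R" "computable k N"
  shows "computable k (\<lambda>xs. bounded_least (\<lambda>j. \<exists>i<N xs. R (i # j # xs) \<noteq> 0) (N xs))"
proof -
  have "computable (Suc k) (\<lambda>zs. of_bool (\<exists>i<N (tl zs). R (i # zs) \<noteq> 0))"
    by (rule computable_bounded_ex[OF assms(1) computable_tl[OF assms(2)]])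
  from computable_bounded_least[OF this assms(2)] show ?thesis by simp
qed

lemma computable_fst_decode: "computable k F \<Longrightarrow> computable k (\<lambda>xs. fst (prod_decode (F xs)))"
proof -
  assume F: "computable k F"
  have "computable (Suc (Suc k)) (\<lambda>ys. of_bool (prod_encode (ys ! 1, ys ! 0) = F (drop 2 ys)))"
    by (intro computable_of_bool_eq computable_prod_encode computable_nth computable_drop2 F)
      simp_all
  from computable_bounded_least_ex[OF this computable_Suc[OF F]] show ?thesis
    by (simp del: bounded_least.simps add: prod_decode_bounded_least)
qed

lemma computable_snd_decode: "computable k F \<Longrightarrow> computable k (\<lambda>xs. snd (prod_decode (F xs)))"
proof -
  assume F: "computable k F"
  have "computable (Suc (Suc k)) (\<lambda>ys. of_bool (prod_encode (ys ! 0, ys ! 1) = F (drop 2 ys)))"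
    by (intro computable_of_bool_eq computable_prod_encode computable_nth computable_drop2 F)
      simp_all
  from computable_bounded_least_ex[OF this computable_Suc[OF F]] show ?thesis
    by (simp del: bounded_least.simps add: prod_decode_bounded_least)
qed

section \<open>Clocked evaluation\<close>

text \<open>\<open>eval_clocked f t xs = Suc v\<close> if \<open>f\<close> halts on \<open>xs\<close> with value
  \<open>v\<close> when every unbounded search inspects only its first \<open>t\<close> candidates, and \<open>0\<close> otherwise.
  The state of such a search is \<open>0\<close> while all candidates so far gave positive values, \<open>1\<close>
  once a candidate has no value yet, and \<open>m + 2\<close> once \<open>m\<close> has been found.\<close>

primrec clocked_prec :: "nat \<Rightarrow> (nat \<Rightarrow> nat \<Rightarrow> nat) \<Rightarrow> nat \<Rightarrow> nat" where
  "clocked_prec a h 0 = a"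
| "clocked_prec a h (Suc n) =
     (if clocked_prec a h n = 0 then 0 else h n (clocked_prec a h n - 1))"

primrec minim_search :: "(nat \<Rightarrow> nat) \<Rightarrow> nat \<Rightarrow> nat" where
  "minim_search h 0 = 0"
| "minim_search h (Suc t) = (if minim_search h t = 0
     then (if h t = 0 then 1 else if h t = 1 then t + 2 else 0)
     else minim_search h t)"

definition clocked_minim :: "(nat \<Rightarrow> nat) \<Rightarrow> nat \<Rightarrow> nat" where
  "clocked_minim h t = (if 2 \<le> minim_search h t then minim_search h t - 1 else 0)"

fun eval_clocked :: "recf \<Rightarrow> nat \<Rightarrow> nat list \<Rightarrow> nat" where
  "eval_clocked Zero t xs = 1"
| "eval_clocked Succ t xs = (case xs of [] \<Rightarrow> 0 | x # _ \<Rightarrow> Suc (Suc x))"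
| "eval_clocked (Proj i) t xs = (if i < length xs then Suc (xs ! i) else 0)"
| "eval_clocked (Comp f gs) t xs = (if 0 \<notin> set (map (\<lambda>g. eval_clocked g t xs) gs)
     then eval_clocked f t (map (\<lambda>g. eval_clocked g t xs - 1) gs) else 0)"
| "eval_clocked (Prec f g) t xs = (case xs of [] \<Rightarrow> 0
     | n # ys \<Rightarrow> clocked_prec (eval_clocked f t ys) (\<lambda>i r. eval_clocked g t (i # r # ys)) n)"
| "eval_clocked (Minim f) t xs = clocked_minim (\<lambda>m. eval_clocked f t (m # xs)) t"

lemma clocked_prec_Suc_eq_Suc:
  "clocked_prec a h (Suc n) = Suc v \<longleftrightarrow> (\<exists>u. clocked_prec a h n = Suc u \<and> h n u = Suc v)"
  by (cases "clocked_prec a h n") auto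

lemma minim_search_eq_0: "minim_search h t = 0 \<longleftrightarrow> (\<forall>j<t. 2 \<le> h j)"
  by (induction t) (auto simp: less_Suc_eq)

lemma minim_search_found:
  "minim_search h t = m + 2 \<longleftrightarrow> (m < t \<and> h m = 1 \<and> (\<forall>j<m. 2 \<le> h j))"
proof (induction t)
  case 0 then show ?case by simp
next
  case (Suc t)
  show ?case
  proof (cases "minim_search h t = 0")
    case True
    then have all: "\<forall>j<t. 2 \<le> h j" using minim_search_eq_0 by auto
    show ?thesis
    proof
      assume a: "minim_search h (Suc t) = m + 2"
      then have "h t = 1" "m = t" using True by (auto split: if_splits)
      then show "m < Suc t \<and> h m = 1 \<and> (\<forall>j<m. 2 \<le> h j)" using all by auto
    next
      assume a: "m < Suc t \<and> h m = 1 \<and> (\<forall>j<m. 2 \<le> h j)"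
      have "m = t"
      proof (rule ccontr)
        assume "m \<noteq> t"
        then have "m < t" using a by auto
        then have "2 \<le> h m" using all by auto
        then show False using a by simp
      qed
      then show "minim_search h (Suc t) = m + 2" using a True by simp
    qed
  next
    case False
    then have "\<not> (\<forall>j<t. 2 \<le> h j)" using minim_search_eq_0 by auto
    then have "(m < Suc t \<and> h m = 1 \<and> (\<forall>j<m. 2 \<le> h j)) \<longleftrightarrow> (m < t \<and> h m = 1 \<and> (\<forall>j<m. 2 \<le> h j))"
      by (auto simp: less_Suc_eq)
    then show ?thesis using False Suc by simp
  qed
qed

lemma clocked_minim_eq_Suc:
  "clocked_minim h t = Suc m \<longleftrightarrow> (m < t \<and> h m = 1 \<and> (\<forall>j<m. 2 \<le> h j))"
proof -
  have "clocked_minim h t = Suc m \<longleftrightarrow> minim_search h t = m + 2" unfolding clocked_minim_def by auto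
  then show ?thesis using minim_search_found by simp
qed

lemma list_all2_map_self: "list_all2 P gs (map h gs) \<longleftrightarrow> (\<forall>g\<in>set gs. P g (h g))"
  by (induction gs) auto

lemma eval_clocked_sound: "eval_clocked f t xs = Suc v \<Longrightarrow> eval f xs v"
proof (induction f arbitrary: xs v)
  case Zero then show ?case by (auto intro: eval.intros)
next
  case Succ then show ?case by (auto intro: eval.intros split: list.splits)
next
  case (Proj i) then show ?case by (auto intro: eval.intros split: if_splits)
next
  case (Comp f gs)
  from Comp.prems have nz: "0 \<notin> set (map (\<lambda>g. eval_clocked g t xs) gs)"
    and fv: "eval_clocked f t (map (\<lambda>g. eval_clocked g t xs - 1) gs) = Suc v"
    by (auto split: if_splits)
  have "eval f (map (\<lambda>g. eval_clocked g t xs - 1) gs) v" using Comp.IH(1) fv by simp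
  moreover have "list_all2 (\<lambda>g w. eval g xs w) gs (map (\<lambda>g. eval_clocked g t xs - 1) gs)"
    unfolding list_all2_map_self
  proof
    fix g assume g: "g \<in> set gs"
    then have "eval_clocked g t xs \<noteq> 0" using nz by auto
    then have "eval_clocked g t xs = Suc (eval_clocked g t xs - 1)" by simp
    then show "eval g xs (eval_clocked g t xs - 1)" using Comp.IH(2)[OF g] by blast
  qed
  ultimately show ?case by (auto intro: eval.intros)
next
  case (Prec f g)
  then obtain n ys where xs: "xs = n # ys" by (auto split: list.splits)
  have "eval (Prec f g) (n # ys) v"
    if "clocked_prec (eval_clocked f t ys) (\<lambda>i r. eval_clocked g t (i # r # ys)) n = Suc v" for n v
    using that
  proof (induction n arbitrary: v)
    case 0
    then show ?case using Prec.IH(1) by (auto intro: eval.intros)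
  next
    case (Suc n)
    then obtain u
      where "clocked_prec (eval_clocked f t ys) (\<lambda>i r. eval_clocked g t (i # r # ys)) n = Suc u"
        and "eval_clocked g t (n # u # ys) = Suc v"
      by (auto simp only: clocked_prec_Suc_eq_Suc)
    with Suc.IH Prec.IH(2) show ?case by (blast intro: eval.intros)
  qed
  then show ?case using Prec.prems xs by simp
next
  case (Minim f)
  from Minim.prems have a: "clocked_minim (\<lambda>m. eval_clocked f t (m # xs)) t = Suc v" by simp
  then have v1: "eval_clocked f t (v # xs) = Suc 0" and lt: "\<forall>j<v. 2 \<le> eval_clocked f t (j # xs)"
    unfolding clocked_minim_eq_Suc by auto
  have "eval f (v # xs) 0" using Minim.IH v1 by blast
  moreover have "\<forall>m<v. \<exists>w. eval f (m # xs) w \<and> w > 0"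
  proof (intro allI impI)
    fix m assume "m < v"
    then have "2 \<le> eval_clocked f t (m # xs)" using lt by auto
    then have "eval_clocked f t (m # xs) = Suc (eval_clocked f t (m # xs) - 1)"
      and "eval_clocked f t (m # xs) - 1 > 0" by auto
    then show "\<exists>w. eval f (m # xs) w \<and> w > 0" using Minim.IH by blast
  qed
  ultimately show ?case by (auto intro: eval.intros)
qed

lemma eval_clocked_mono:
  "eval_clocked f t xs = Suc v \<Longrightarrow> t \<le> t' \<Longrightarrow> eval_clocked f t' xs = Suc v"
proof (induction f arbitrary: xs v)
  case Zero then show ?case by simp
next
  case Succ then show ?case by simp
next
  case (Proj i) then show ?case by simp
next
  case (Comp f gs)
  from Comp.prems have nz: "0 \<notin> set (map (\<lambda>g. eval_clocked g t xs) gs)"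
    and fv: "eval_clocked f t (map (\<lambda>g. eval_clocked g t xs - 1) gs) = Suc v"
    by (auto split: if_splits)
  have eq: "eval_clocked g t' xs = eval_clocked g t xs" if "g \<in> set gs" for g
  proof -
    have "eval_clocked g t xs \<noteq> 0" using nz that by auto
    then have s: "eval_clocked g t xs = Suc (eval_clocked g t xs - 1)" by simp
    from Comp.IH(2)[OF that s Comp.prems(2)] s show ?thesis by simp
  qed
  then have m1: "map (\<lambda>g. eval_clocked g t' xs) gs = map (\<lambda>g. eval_clocked g t xs) gs"
    and m2: "map (\<lambda>g. eval_clocked g t' xs - 1) gs = map (\<lambda>g. eval_clocked g t xs - 1) gs" by auto
  have f': "eval_clocked f t' (map (\<lambda>g. eval_clocked g t xs - 1) gs) = Suc v"
    using Comp.IH(1)[OF fv Comp.prems(2)] .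
  show ?case unfolding eval_clocked.simps m1 m2 using nz f' by simp
next
  case (Prec f g)
  then obtain n ys where xs: "xs = n # ys" by (auto split: list.splits)
  have "clocked_prec (eval_clocked f t' ys) (\<lambda>i r. eval_clocked g t' (i # r # ys)) n = Suc v"
    if "clocked_prec (eval_clocked f t ys) (\<lambda>i r. eval_clocked g t (i # r # ys)) n = Suc v" for n v
    using that
  proof (induction n arbitrary: v)
    case 0
    then show ?case using Prec.IH(1) Prec.prems(2) by auto
  next
    case (Suc n)
    then obtain u
      where "clocked_prec (eval_clocked f t ys) (\<lambda>i r. eval_clocked g t (i # r # ys)) n = Suc u"
        and "eval_clocked g t (n # u # ys) = Suc v"
      by (auto simp only: clocked_prec_Suc_eq_Suc)
    with Suc.IH Prec.IH(2) Prec.prems(2) show ?case by (auto simp only: clocked_prec_Suc_eq_Suc)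
  qed
  then show ?case using Prec.prems xs by simp
next
  case (Minim f)
  from Minim.prems have a: "clocked_minim (\<lambda>m. eval_clocked f t (m # xs)) t = Suc v" by simp
  then have v1: "eval_clocked f t (v # xs) = Suc 0" and lt: "\<forall>j<v. 2 \<le> eval_clocked f t (j # xs)"
    and vt: "v < t"
    unfolding clocked_minim_eq_Suc by auto
  have "eval_clocked f t' (v # xs) = Suc 0" using Minim.IH v1 Minim.prems(2) by blast
  moreover have "\<forall>j<v. 2 \<le> eval_clocked f t' (j # xs)"
  proof (intro allI impI)
    fix m assume "m < v"
    then have "2 \<le> eval_clocked f t (m # xs)" using lt by auto
    then have s: "eval_clocked f t (m # xs) = Suc (eval_clocked f t (m # xs) - 1)" by auto
    from Minim.IH[OF s Minim.prems(2)] s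
    have "eval_clocked f t' (m # xs) = eval_clocked f t (m # xs)" by simp
    then show "2 \<le> eval_clocked f t' (m # xs)" using \<open>2 \<le> eval_clocked f t (m # xs)\<close> by simp
  qed
  ultimately have "clocked_minim (\<lambda>m. eval_clocked f t' (m # xs)) t' = Suc v"
    unfolding clocked_minim_eq_Suc using vt Minim.prems(2) by auto
  then show ?case by simp
qed

lemma uniform_bound_below:
  fixes P :: "nat \<Rightarrow> nat \<Rightarrow> bool"
  assumes "\<forall>m<n. \<exists>t. P m t" and "\<And>m. mono (P m)"
  shows "\<exists>T. \<forall>m<n. P m T"
proof -
  obtain t where t: "\<forall>m<n. P m (t m)" using assms(1) by metis
  have "P m (\<Sum>i<n. t i)" if "m < n" for m
  proof -
    have "t m \<le> (\<Sum>i<n. t i)" using that by (intro member_le_sum) auto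
    with assms(2) have "P m (t m) \<le> P m (\<Sum>i<n. t i)" by (rule monoD)
    with t that show ?thesis by (blast dest: le_boolD)
  qed
  then show ?thesis by blast
qed

lemma mono_eval_clocked_eq_Suc: "mono (\<lambda>t. eval_clocked f t xs = Suc v)"
  by (intro monoI le_boolI) (use eval_clocked_mono in blast)

lemma eval_clocked_complete: "eval f xs v \<Longrightarrow> \<exists>t. eval_clocked f t xs = Suc v"
proof (induction rule: eval.induct)
  case (eval_Comp xs gs ws f v)
  have len: "length gs = length ws" using eval_Comp.IH(1) by (rule list_all2_lengthD)
  have "\<exists>T. \<forall>i<length gs. eval_clocked (gs ! i) T xs = Suc (ws ! i)"
  proof (rule uniform_bound_below)
    show "\<forall>i<length gs. \<exists>t. eval_clocked (gs ! i) t xs = Suc (ws ! i)"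
      using eval_Comp.IH(1) by (auto simp: list_all2_conv_all_nth)
  qed (rule mono_eval_clocked_eq_Suc)
  then obtain T where T: "\<forall>i<length gs. eval_clocked (gs ! i) T xs = Suc (ws ! i)" ..
  from eval_Comp.IH(2) obtain t_f where t_f: "eval_clocked f t_f ws = Suc v" by blast
  let ?T = "max T t_f"
  have args: "map (\<lambda>g. eval_clocked g ?T xs) gs = map Suc ws"
  proof (rule nth_equalityI)
    fix i assume "i < length (map (\<lambda>g. eval_clocked g ?T xs) gs)"
    then show "map (\<lambda>g. eval_clocked g ?T xs) gs ! i = map Suc ws ! i"
      using T len eval_clocked_mono[of "gs ! i" T xs "ws ! i" ?T] by simp
  qed (simp add: len)
  have "map (\<lambda>g. eval_clocked g ?T xs - 1) gs
      = map (\<lambda>x. x - 1) (map (\<lambda>g. eval_clocked g ?T xs) gs)"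
    by simp
  also have "\<dots> = ws" unfolding args by (simp add: o_def)
  finally have "map (\<lambda>g. eval_clocked g ?T xs - 1) gs = ws" .
  moreover have "eval_clocked f ?T ws = Suc v" using eval_clocked_mono[OF t_f] by simp
  ultimately show ?case using args by (intro exI[of _ ?T]) auto
next
  case (eval_PrecS f g n xs u v)
  from eval_PrecS.IH(1) obtain t1 where t1: "eval_clocked (Prec f g) t1 (n # xs) = Suc u" by blast
  from eval_PrecS.IH(2) obtain t2 where t2: "eval_clocked g t2 (n # u # xs) = Suc v" by blast
  have "eval_clocked (Prec f g) (max t1 t2) (n # xs) = Suc u"
    by (rule eval_clocked_mono[OF t1]) simp
  moreover have "eval_clocked g (max t1 t2) (n # u # xs) = Suc v"
    by (rule eval_clocked_mono[OF t2]) simp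
  ultimately show ?case by (intro exI[of _ "max t1 t2"]) simp
next
  case (eval_Minim f n xs)
  from eval_Minim.IH(1) obtain t0 where t0: "eval_clocked f t0 (n # xs) = Suc 0" by blast
  define P where "P m t \<longleftrightarrow> (\<exists>w>0. eval_clocked f t (m # xs) = Suc w)" for m t
  have "\<forall>m<n. \<exists>t. P m t" unfolding P_def using eval_Minim.IH(2) by blast
  moreover have "mono (P m)" for m
    unfolding P_def by (intro monoI le_boolI) (use eval_clocked_mono in blast)
  ultimately obtain T where T: "\<forall>m<n. P m T" using uniform_bound_below by blast
  let ?T = "max (max T t0) (Suc n)"
  have "eval_clocked f ?T (n # xs) = Suc 0" by (rule eval_clocked_mono[OF t0]) simp
  moreover have "2 \<le> eval_clocked f ?T (j # xs)" if "j < n" for j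
  proof -
    have "P j ?T" using monoD[OF \<open>mono (P j)\<close>, of T ?T] T that by auto
    then show ?thesis unfolding P_def by auto
  qed
  ultimately have "clocked_minim (\<lambda>m. eval_clocked f ?T (m # xs)) ?T = Suc n"
    unfolding clocked_minim_eq_Suc by auto
  then show ?case by (intro exI[of _ ?T]) simp
qed simp_all

lemma halts_iff_eval_clocked: "(\<exists>v. eval f xs v) \<longleftrightarrow> (\<exists>t. eval_clocked f t xs \<noteq> 0)"
proof
  assume "\<exists>v. eval f xs v"
  then obtain v t where "eval_clocked f t xs = Suc v" using eval_clocked_complete by blast
  then have "eval_clocked f t xs \<noteq> 0" by simp
  then show "\<exists>t. eval_clocked f t xs \<noteq> 0" by blast
next
  assume "\<exists>t. eval_clocked f t xs \<noteq> 0"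
  then obtain t where "eval_clocked f t xs \<noteq> 0" by blast
  then obtain v where "eval_clocked f t xs = Suc v" using not0_implies_Suc by blast
  then show "\<exists>v. eval f xs v" using eval_clocked_sound by blast
qed


lemma computable_prod_list:
  "\<forall>F\<in>set Fs. computable k F \<Longrightarrow> computable k (\<lambda>xs. prod_list (map (\<lambda>F. F xs) Fs))"
  by (induction Fs) (simp_all add: computable_const computable_mult)

lemma computable_eval_clocked_Comp:
  assumes f: "computable (Suc (length gs)) (\<lambda>ys. eval_clocked f (hd ys) (tl ys))"
    and gs: "\<forall>g\<in>set gs. computable (Suc k) (\<lambda>ys. eval_clocked g (hd ys) (tl ys))"
  shows "computable (Suc k) (\<lambda>ys. eval_clocked (Comp f gs) (hd ys) (tl ys))"
proof -
  let ?Gs = "map (\<lambda>g ys. eval_clocked g (hd ys) (tl ys)) gs"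
  let ?Args = "hd # map (\<lambda>g ys. eval_clocked g (hd ys) (tl ys) - 1) gs"
  have all_defined: "computable (Suc k) (\<lambda>ys. prod_list (map (\<lambda>F. F ys) ?Gs))"
    using gs by (intro computable_prod_list) auto
  have apply_f: "computable (Suc k)
      (\<lambda>ys. (\<lambda>zs. eval_clocked f (hd zs) (tl zs)) (map (\<lambda>F. F ys) ?Args))"
    by (rule computable_comp[OF f])
      (use gs in \<open>auto intro: computable_hd computable_diff computable_const\<close>)
  have "computable (Suc k) (\<lambda>ys. if prod_list (map (\<lambda>F. F ys) ?Gs) = 0 then 0
      else (\<lambda>zs. eval_clocked f (hd zs) (tl zs)) (map (\<lambda>F. F ys) ?Args))"
    by (rule computable_if[OF all_defined computable_zero apply_f])
  then show ?thesis by (rule computable_cong) (simp add: o_def prod_list_zero_iff)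
qed

lemma computable_eval_clocked_Prec:
  assumes f: "computable (Suc k) (\<lambda>ys. eval_clocked f (hd ys) (tl ys))"
    and g: "computable (Suc (Suc (Suc k))) (\<lambda>ys. eval_clocked g (hd ys) (tl ys))"
  shows "computable (Suc (Suc k)) (\<lambda>ys. eval_clocked (Prec f g) (hd ys) (tl ys))"
proof -
  \<comment> \<open>The recursion step sees \<open>i # r # t # n # ys\<close>.\<close>
  define F where "F ys = eval_clocked f (ys ! 0) (drop 2 ys)" for ys
  define G where "G qs = (if qs ! 1 = 0 then 0
    else eval_clocked g (qs ! 2) (qs ! 0 # (qs ! 1 - 1) # drop 4 qs))" for qs
  have F: "computable (Suc (Suc k)) F"
    using computable_shift[OF f] unfolding F_def by simp
  have "computable (Suc (Suc (Suc (Suc k)))) (\<lambda>qs. (\<lambda>zs. eval_clocked g (hd zs) (tl zs))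
      (map (\<lambda>F. F qs) ([\<lambda>qs. qs ! 2, \<lambda>qs. qs ! 0, \<lambda>qs. qs ! 1 - 1] @
        map (\<lambda>i qs. qs ! i) [4..<Suc (Suc (Suc (Suc k)))])))"
    by (rule computable_comp[OF g])
      (auto simp del: upt_Suc intro!: computable_nth computable_diff computable_const)
  then have "computable (Suc (Suc (Suc (Suc k)))) (\<lambda>qs. if qs ! 1 = 0 then 0
      else eval_clocked g (qs ! 2) (qs ! 0 # (qs ! 1 - 1) # drop 4 qs))"
    by (intro computable_if[OF computable_nth computable_zero], simp,
        elim computable_cong) (simp del: upt_Suc add: o_def map_nth_upt_drop)
  then have G: "computable (Suc (Suc (Suc (Suc k)))) G" unfolding G_def .
  have "prim_rec F G n ys
      = clocked_prec (eval_clocked f (ys ! 0) (drop 2 ys))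
          (\<lambda>i r. eval_clocked g (ys ! 0) (i # r # drop 2 ys)) n" for n ys
    by (induction n) (simp_all add: F_def G_def)
  with computable_prim_rec_on[OF F G computable_nth[of 1]]
  have "computable (Suc (Suc k)) (\<lambda>ys. clocked_prec (eval_clocked f (ys ! 0) (drop 2 ys))
      (\<lambda>i r. eval_clocked g (ys ! 0) (i # r # drop 2 ys)) (ys ! 1))"
    by simp
  then show ?thesis
    by (rule computable_cong) (auto simp: length_Suc_conv)
qed

lemma computable_eval_clocked_Minim:
  assumes f: "computable (Suc (Suc k)) (\<lambda>ys. eval_clocked f (hd ys) (tl ys))"
  shows "computable (Suc k) (\<lambda>ys. eval_clocked (Minim f) (hd ys) (tl ys))"
proof -
  \<comment> \<open>The recursion step sees \<open>i # state # t # xs\<close>.\<close>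
  define F where "F qs = eval_clocked f (qs ! 2) (qs ! 0 # drop 3 qs)" for qs
  define G where "G qs = (if qs ! 1 = 0
    then (if F qs = 0 then 1 else if F qs = 1 then qs ! 0 + 2 else 0) else qs ! 1)" for qs
  define S where "S ys = minim_search (\<lambda>m. eval_clocked f (ys ! 0) (m # drop 1 ys)) (ys ! 0)"
    for ys
  have "computable (Suc (Suc (Suc k))) (\<lambda>qs. (\<lambda>zs. eval_clocked f (hd zs) (tl zs))
      (map (\<lambda>i. qs ! i) (2 # 0 # [3..<Suc (Suc (Suc k))])))"
    by (rule computable_select) (use f in \<open>simp_all del: upt_Suc\<close>)
  then have F: "computable (Suc (Suc (Suc k))) F"
    unfolding F_def by (rule computable_cong) (simp del: upt_Suc add: map_nth_upt_drop)
  have G: "computable (Suc (Suc (Suc k))) G" unfolding G_def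
    by (intro computable_if computable_if_eq computable_nth F computable_const computable_add)
      simp_all
  have "prim_rec (\<lambda>_. 0) G n ys = minim_search (\<lambda>m. eval_clocked f (ys ! 0) (m # drop 1 ys)) n"
    for n ys
    by (induction n) (simp_all add: F_def G_def)
  with computable_prim_rec_on[OF computable_zero G computable_nth[of 0]]
  have S: "computable (Suc k) S" unfolding S_def by simp
  have "computable (Suc k) (\<lambda>ys. if 2 \<le> S ys then S ys - 1 else 0)"
    by (intro computable_if_le computable_const S computable_diff computable_zero)
  then show ?thesis
    by (rule computable_cong) (auto simp: length_Suc_conv clocked_minim_def S_def)
qed

lemma computable_eval_clocked: "computable (Suc k) (\<lambda>ys. eval_clocked f (hd ys) (tl ys))"
proof (induction f arbitrary: k)
  case Zero
  show ?case by (rule computable_cong[OF computable_const[of _ 1]]) simp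
next
  case Succ
  show ?case
  proof (cases k)
    case 0
    show ?thesis by (rule computable_cong[OF computable_zero]) (auto simp: 0 length_Suc_conv)
  next
    case (Suc k')
    have "computable (Suc k) (\<lambda>ys. Suc (Suc (ys ! 1)))"
      by (intro computable_Suc computable_nth) (simp add: Suc)
    then show ?thesis by (rule computable_cong) (auto simp: Suc length_Suc_conv)
  qed
next
  case (Proj i)
  show ?case
  proof (cases "i < k")
    case True
    have "computable (Suc k) (\<lambda>ys. Suc (ys ! Suc i))"
      by (intro computable_Suc computable_nth) (simp add: True)
    then show ?thesis by (rule computable_cong) (use True in \<open>auto simp: length_Suc_conv\<close>)
  next
    case False
    show ?thesis
      by (rule computable_cong[OF computable_zero]) (use False in \<open>auto simp: length_Suc_conv\<close>)
  qed
next
  case (Comp f gs)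
  then show ?case by (intro computable_eval_clocked_Comp) auto
next
  case (Prec f g)
  show ?case
  proof (cases k)
    case 0
    show ?thesis by (rule computable_cong[OF computable_zero]) (auto simp: 0 length_Suc_conv)
  next
    case (Suc k')
    show ?thesis unfolding Suc by (rule computable_eval_clocked_Prec[OF Prec.IH])
  qed
next
  case (Minim f)
  then show ?case by (rule computable_eval_clocked_Minim)
qed

section \<open>Strings coded as numbers\<close>

fun dec :: "nat \<Rightarrow> bits" where
  "dec 0 = []"
| "dec (Suc k) = odd k # dec (k div 2)"

lemma dec_enc [simp]: "dec (enc xs) = xs"
proof (induction xs)
  case (Cons b xs)
  have "enc (b # xs) = Suc (2 * enc xs + of_bool b)" by simp
  then show ?case using Cons.IH by (simp only: dec.simps) simp
qed simp

lemma enc_dec [simp]: "enc (dec n) = n"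
  by (induction n rule: dec.induct) auto

lemma enc_inj: "enc xs = enc ys \<Longrightarrow> xs = ys"
  by (metis dec_enc)

lemma enc_eq_horner_sum: "enc z = horner_sum (\<lambda>b. if b then 2 else 1) 2 z"
  by (induction z) auto

lemma length_le_enc: "length xs \<le> enc xs"
  by (induction xs) auto

definition code_tl :: "nat \<Rightarrow> nat" where
  "code_tl u = (u - 1) div 2"

definition code_drop :: "nat \<Rightarrow> nat \<Rightarrow> nat" where
  "code_drop k u = (code_tl ^^ k) u"

lemma code_tl_enc: "code_tl (enc xs) = enc (tl xs)"
  by (cases xs) (auto simp: code_tl_def)

lemma code_drop_enc: "code_drop k (enc xs) = enc (drop k xs)"
proof (induction k)
  case 0 then show ?case by (simp add: code_drop_def)
next
  case (Suc k)
  then have "code_drop (Suc k) (enc xs) = code_tl (enc (drop k xs))"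
    by (simp add: code_drop_def)
  also have "\<dots> = enc (drop (Suc k) xs)" by (simp add: code_tl_enc drop_Suc tl_drop)
  finally show ?case .
qed

lemma enc_drop_nth:
  "k < length xs \<Longrightarrow> enc (drop k xs) \<noteq> 0 \<and> (enc (drop k xs) mod 2 = 0 \<longleftrightarrow> xs ! k)"
  by (simp flip: Cons_nth_drop_Suc)

lemma computable_code_drop:
  "computable k K \<Longrightarrow> computable k U \<Longrightarrow> computable k (\<lambda>xs. code_drop (K xs) (U xs))"
proof -
  assume KU: "computable k K" "computable k U"
  have step: "computable (Suc (Suc k)) (\<lambda>ys. (ys ! 1 - 1) div 2)"
    by (intro computable_div2 computable_diff computable_nth computable_const) simp
  have "prim_rec U (\<lambda>ys. (ys ! 1 - 1) div 2) n xs = code_drop n (U xs)" for n xs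
    by (induction n) (simp_all add: code_drop_def code_tl_def)
  with computable_prim_rec_on[OF KU(2) step KU(1)] show ?thesis by simp
qed

text \<open>Arithmetic parsing of a code \<open>W = enc (spair z y)\<close>: the bit at position \<open>k\<close> is
  \<open>True\<close> iff \<open>code_drop k W\<close> is even and nonzero, and \<open>|z|\<close> is the first \<open>j\<close> at which the
  bit pair \<open>2 j, 2 j + 1\<close> is the separator \<open>False, True\<close>.\<close>

definition parse_sep :: "nat \<Rightarrow> nat \<Rightarrow> nat" where
  "parse_sep W j = (if code_drop (2 * j) W = 0 then 0
     else if code_drop (2 * j) W mod 2 = 0 then 0
     else if code_drop (Suc (2 * j)) W = 0 then 0
     else if code_drop (Suc (2 * j)) W mod 2 = 0 then 1 else 0)"

definition parse_len :: "nat \<Rightarrow> nat" where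
  "parse_len W = bounded_least (\<lambda>j. parse_sep W j \<noteq> 0) W"

definition parse_snd :: "nat \<Rightarrow> nat" where
  "parse_snd W = code_drop (2 * parse_len W + 2) W"

definition parse_val :: "nat \<Rightarrow> nat" where
  "parse_val W = (\<Sum>i<parse_len W. of_bool (code_drop (2 * i) W mod 2 = 0) * 2 ^ i)"

definition parse_fst :: "nat \<Rightarrow> nat" where
  "parse_fst W = (\<Sum>i<parse_len W. (if code_drop (2 * i) W mod 2 = 0 then 2 else 1) * 2 ^ i)"

lemma length_concat_double: "length (concat (map (\<lambda>b. [b, b]) z)) = 2 * length z"
  by (induction z) auto

lemma nth_concat_double: "i < length z \<Longrightarrow> concat (map (\<lambda>b. [b, b]) z) ! (2 * i) = z ! i \<and>
  concat (map (\<lambda>b. [b, b]) z) ! Suc (2 * i) = z ! i"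
proof (induction z arbitrary: i)
  case Nil then show ?case by simp
next
  case (Cons b z)
  show ?case
  proof (cases i)
    case 0 then show ?thesis by simp
  next
    case (Suc i')
    then have "i' < length z" using Cons.prems by simp
    then show ?thesis using Cons.IH Suc by (simp add: nth_append)
  qed
qed

lemma length_spair: "length (spair z y) = 2 * length z + 2 + length y"
  unfolding spair_def by (simp add: length_concat_double)

lemma nth_spair_fst:
  "i < length z \<Longrightarrow> spair z y ! (2 * i) = z ! i \<and> spair z y ! Suc (2 * i) = z ! i"
  unfolding spair_def using nth_concat_double[of i z]
  by (simp add: nth_append length_concat_double)

lemma nth_spair_sep: "spair z y ! (2 * length z) = False \<and> spair z y ! Suc (2 * length z) = True"
  unfolding spair_def by (simp add: nth_append length_concat_double)

lemma drop_spair: "drop (2 * length z + 2) (spair z y) = y"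
  unfolding spair_def by (simp add: length_concat_double)

lemma parse_sep_spair:
  assumes W: "W = enc (spair z y)"
  shows "parse_sep W j \<noteq> 0 \<longleftrightarrow>
    Suc (2 * j) < length (spair z y) \<and> \<not> spair z y ! (2 * j) \<and> spair z y ! Suc (2 * j)"
proof -
  let ?w = "spair z y"
  show ?thesis
  proof (cases "Suc (2 * j) < length ?w")
    case True
    then have "2 * j < length ?w" by simp
    then show ?thesis using True enc_drop_nth[of "2 * j" ?w] enc_drop_nth[of "Suc (2 * j)" ?w]
      unfolding parse_sep_def W code_drop_enc by auto
  next
    case False
    then have "code_drop (Suc (2 * j)) W = 0" unfolding W code_drop_enc by simp
    then show ?thesis using False unfolding parse_sep_def by auto
  qed
qed

lemma parse_len_spair: "parse_len (enc (spair z y)) = length z"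
proof -
  let ?w = "spair z y"
  let ?P = "\<lambda>j. parse_sep (enc ?w) j \<noteq> 0"
  have PL: "?P (length z)"
    unfolding parse_sep_spair[OF refl] using nth_spair_sep[of z y] length_spair[of z y] by simp
  have nP: "\<not> ?P j" if "j < length z" for j
    unfolding parse_sep_spair[OF refl] using nth_spair_fst[OF that, of y] by auto
  have lt: "length z < enc ?w" using length_le_enc[of ?w] length_spair[of z y] by simp
  have least: "(LEAST j. ?P j) = length z"
    by (rule Least_equality) (use PL nP not_less in blast)+
  show ?thesis unfolding parse_len_def bounded_least_eq using PL lt least by auto
qed

lemma parse_spair:
  assumes W: "W = enc (spair z y)"
  shows "parse_len W = length z" "parse_snd W = enc y" "parse_val W = horner_sum of_bool 2 z"
    "parse_fst W = enc z"
proof -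
  let ?w = "spair z y"
  show L: "parse_len W = length z" using parse_len_spair W by simp
  show "parse_snd W = enc y"
    unfolding parse_snd_def W code_drop_enc parse_len_spair using drop_spair by simp
  have bit: "code_drop (2 * i) W mod 2 = 0 \<longleftrightarrow> z ! i" if "i < length z" for i
  proof -
    have "2 * i < length ?w" using that length_spair[of z y] by simp
    then show ?thesis
      unfolding W code_drop_enc using enc_drop_nth[of "2 * i" ?w] nth_spair_fst[OF that, of y]
      by simp
  qed
  show "parse_val W = horner_sum of_bool 2 z"
    unfolding parse_val_def horner_sum_eq_sum L atLeast0LessThan
    by (rule sum.cong) (simp_all add: bit)
  show "parse_fst W = enc z"
    unfolding parse_fst_def enc_eq_horner_sum horner_sum_eq_sum L atLeast0LessThan
    by (rule sum.cong) (simp_all add: bit)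
qed

lemma computable_parse_sep:
  "computable k W \<Longrightarrow> computable k J \<Longrightarrow> computable k (\<lambda>xs. parse_sep (W xs) (J xs))"
  unfolding parse_sep_def
  by (intro computable_if computable_code_drop computable_double computable_Suc computable_mod2
      computable_const computable_zero)

lemma computable_parse_len: "computable k W \<Longrightarrow> computable k (\<lambda>xs. parse_len (W xs))"
proof -
  assume W: "computable k W"
  have "computable (Suc k) (\<lambda>ys. parse_sep (W (tl ys)) (ys ! 0))"
    by (intro computable_parse_sep computable_tl W computable_nth) simp
  from computable_bounded_least[OF this W] show ?thesis unfolding parse_len_def by simp
qed

lemma computable_parse_snd: "computable k W \<Longrightarrow> computable k (\<lambda>xs. parse_snd (W xs))"
  unfolding parse_snd_def
  by (intro computable_code_drop computable_add computable_double computable_parse_len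
      computable_const)

lemma computable_parse_val: "computable k W \<Longrightarrow> computable k (\<lambda>xs. parse_val (W xs))"
proof -
  assume W: "computable k W"
  have "computable (Suc k)
      (\<lambda>ys. of_bool (code_drop (2 * ys ! 0) (W (tl ys)) mod 2 = 0) * 2 ^ (ys ! 0))"
    by (intro computable_mult computable_of_bool_eq computable_mod2 computable_code_drop
        computable_double computable_nth computable_tl W computable_const computable_power2)
      simp_all
  from computable_sum[OF this computable_parse_len[OF W]] show ?thesis
    unfolding parse_val_def by simp
qed

lemma computable_parse_fst: "computable k W \<Longrightarrow> computable k (\<lambda>xs. parse_fst (W xs))"
proof -
  assume W: "computable k W"
  have "computable (Suc k)
      (\<lambda>ys. (if code_drop (2 * ys ! 0) (W (tl ys)) mod 2 = 0 then 2 else 1) * 2 ^ (ys ! 0))"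
    by (intro computable_mult computable_if computable_mod2 computable_code_drop
        computable_double computable_nth computable_tl W computable_const computable_power2)
      simp_all
  from computable_sum[OF this computable_parse_len[OF W]] show ?thesis
    unfolding parse_fst_def by simp
qed

lemma list_all2_unique:
  "list_all2 (\<lambda>g w. Q g w \<and> (\<forall>w'. Q g w' \<longrightarrow> w = w')) gs ws \<Longrightarrow> list_all2 Q gs ws' \<Longrightarrow>
    ws = ws'"
proof (induction gs arbitrary: ws ws')
  case Nil then show ?case by simp
next
  case (Cons g gs)
  then show ?case by (auto simp: list_all2_Cons1)
qed

lemma eval_deterministic: "eval f xs v \<Longrightarrow> eval f xs w \<Longrightarrow> v = w"
proof (induction arbitrary: w rule: eval.induct)
  case (eval_Zero xs) from eval_Zero.prems show ?case by (cases rule: eval.cases) auto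
next
  case (eval_Succ x xs) from eval_Succ.prems show ?case by (cases rule: eval.cases) auto
next
  case (eval_Proj i xs) from eval_Proj.prems show ?case by (cases rule: eval.cases) auto
next
  case (eval_Comp xs gs ws f v)
  from eval_Comp.prems obtain ws'
    where ws': "list_all2 (\<lambda>g w. eval g xs w) gs ws'" "eval f ws' w"
    by (cases rule: eval.cases) auto
  have "ws = ws'"
    by (rule list_all2_unique[OF _ ws'(1)])
      (use eval_Comp.IH(1) in \<open>auto elim: list_all2_mono\<close>)
  then show ?case using eval_Comp.IH(2) ws'(2) by simp
next
  case (eval_Prec0 f xs v g)
  from eval_Prec0.prems have "eval f xs w" by (cases rule: eval.cases) auto
  then show ?case using eval_Prec0.IH by simp
next
  case (eval_PrecS f g n xs u v)
  from eval_PrecS.prems obtain u' where u': "eval (Prec f g) (n # xs) u'" "eval g (n # u' # xs) w"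
    by (cases rule: eval.cases) auto
  from eval_PrecS.IH(1) u'(1) have "u = u'" by simp
  with eval_PrecS.IH(2) u'(2) show ?case by simp
next
  case (eval_Minim f n xs)
  from eval_Minim.prems have w0: "eval f (w # xs) 0"
    and wl: "\<forall>m<w. \<exists>u. eval f (m # xs) u \<and> u > 0"
    by (cases rule: eval.cases; auto)+
  show ?case
  proof (rule ccontr)
    assume "n \<noteq> w"
    then have "n < w \<or> w < n" by arith
    then show False
    proof
      assume "n < w"
      then obtain u where u: "eval f (n # xs) u" "u > 0" using wl by auto
      from eval_Minim.IH(1) u(1) have "0 = u" by simp
      then show False using u(2) by simp
    next
      assume "w < n"
      then obtain u where u: "eval f (w # xs) u" "\<forall>u'. eval f (w # xs) u' \<longrightarrow> u = u'" "u > 0"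
        using eval_Minim.IH(2) by blast
      then have "u = 0" using w0 by simp
      then show False using u(3) by simp
    qed
  qed
qed

definition machine_of :: "recf \<Rightarrow> bits \<Rightarrow> bits option" where
  "machine_of P w =
    (if \<exists>v. eval P [enc w] v then Some (dec (THE v. eval P [enc w] v)) else None)"

lemma machine_of_eval: "eval P [enc w] v \<Longrightarrow> machine_of P w = Some (dec v)"
proof -
  assume e: "eval P [enc w] v"
  then have "(THE v. eval P [enc w] v) = v" using eval_deterministic by blast
  then show ?thesis using e unfolding machine_of_def by auto
qed

lemma partial_computable_machine_of: "partial_computable (machine_of P)"
  unfolding partial_computable_def
proof (intro exI[of _ P] allI)
  fix x v
  show "eval P [enc x] v \<longleftrightarrow> (\<exists>z. machine_of P x = Some z \<and> v = enc z)"
  proof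
    assume "eval P [enc x] v"
    then show "\<exists>z. machine_of P x = Some z \<and> v = enc z" using machine_of_eval by fastforce
  next
    assume "\<exists>z. machine_of P x = Some z \<and> v = enc z"
    then obtain z where z: "machine_of P x = Some z" "v = enc z" by blast
    then obtain v' where v': "eval P [enc x] v'"
      unfolding machine_of_def by (auto split: if_splits)
    then have "z = dec v'" using machine_of_eval z by simp
    then show "eval P [enc x] v" using v' z by simp
  qed
qed

lemma total_program: "computable 1 F \<Longrightarrow> \<exists>P. \<forall>W. eval P [W] (F [W])"
proof -
  assume "computable 1 F"
  then obtain f where f: "computes 1 f F" unfolding computable_def by blast
  have "eval f [W] (F [W])" for W using f unfolding computes_def by simp
  then show ?thesis by blast
qed

lemma least_zero_program:
  assumes "computable 2 G" "computable 2 H"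
  shows "\<exists>P. \<forall>W m. G [m, W] = 0 \<longrightarrow> (\<forall>m'<m. G [m', W] \<noteq> 0) \<longrightarrow> eval P [W] (H [m, W])"
proof -
  obtain g h where g: "computes 2 g G" and h: "computes 2 h H" using assms computable_def by auto
  have "eval (Comp h [Minim g, Proj 0]) [W] (H [m, W])"
    if "G [m, W] = 0" "\<forall>m'<m. G [m', W] \<noteq> 0" for W m
  proof (rule eval_Comp)
    have "eval (Minim g) [W] m"
    proof (rule eval_Minim)
      have ge: "eval g [a, W] (G [a, W])" for a using g unfolding computes_def by simp
      show "eval g [m, W] 0" using ge[of m] that(1) by simp
      show "\<forall>m'<m. \<exists>w. eval g [m', W] w \<and> w > 0"
        using ge that(2) by blast
    qed
    moreover have "eval (Proj 0) [W] W" using eval_Proj[of 0 "[W]"] by simp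
    ultimately show "list_all2 (\<lambda>g w. eval g [W] w) [Minim g, Proj 0] [m, W]" by simp
    show "eval h [m, W] (H [m, W])" using h unfolding computes_def by simp
  qed
  then show ?thesis by blast
qed

lemma spair_fst_machine: "\<exists>T. partial_computable T \<and> (\<forall>z y. T (spair z y) = Some z)"
proof -
  have "computable 1 (\<lambda>xs. parse_fst (xs ! 0))"
    by (intro computable_parse_fst computable_nth) simp
  then obtain P where P: "\<forall>W. eval P [W] (parse_fst ([W] ! 0))" using total_program by blast
  have "machine_of P (spair z y) = Some z" for z y
    using P[rule_format, of "enc (spair z y)"] parse_spair(4)[OF refl] machine_of_eval
    by fastforce
  then show ?thesis using partial_computable_machine_of by blast
qed

section \<open>Enumerating the strings of bounded complexity\<close>

definition first_stage :: "(nat \<Rightarrow> nat \<Rightarrow> bool) \<Rightarrow> nat \<Rightarrow> bool" where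
  "first_stage H m \<longleftrightarrow> (case prod_decode m of (a, s) \<Rightarrow> H a s \<and> (s = 0 \<or> \<not> H a (s - 1)))"

lemma first_stage_iff:
  assumes mono: "\<And>a s s'. H a s \<Longrightarrow> s \<le> s' \<Longrightarrow> H a s'"
  shows "first_stage H m \<longleftrightarrow> m \<in> (\<lambda>a. prod_encode (a, LEAST s. H a s)) ` {a. \<exists>s. H a s}"
proof
  assume first: "first_stage H m"
  obtain a s where m: "prod_decode m = (a, s)" by force
  then have H: "H a s" and earliest: "s = 0 \<or> \<not> H a (s - 1)"
    using first unfolding first_stage_def by auto
  have "(LEAST s. H a s) = s"
  proof (rule Least_equality)
    fix s' assume "H a s'"
    show "s \<le> s'"
    proof (rule ccontr)
      assume "\<not> s \<le> s'"
      then show False using mono[OF \<open>H a s'\<close>, of "s - 1"] earliest by auto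
    qed
  qed (rule H)
  then have "m = prod_encode (a, LEAST s. H a s)"
    using m prod_decode_inverse[of m] by simp
  then show "m \<in> (\<lambda>a. prod_encode (a, LEAST s. H a s)) ` {a. \<exists>s. H a s}"
    using H by blast
next
  assume "m \<in> (\<lambda>a. prod_encode (a, LEAST s. H a s)) ` {a. \<exists>s. H a s}"
  then obtain a where ex: "\<exists>s. H a s" and m: "m = prod_encode (a, LEAST s. H a s)" by blast
  have "H a (LEAST s. H a s)" using LeastI_ex[OF ex] .
  moreover have "(LEAST s. H a s) = 0 \<or> \<not> H a ((LEAST s. H a s) - 1)"
    using not_less_Least[of "(LEAST s. H a s) - 1" "H a"] by (cases "LEAST s. H a s") auto
  ultimately show "first_stage H m" unfolding first_stage_def m by simp
qed

lemma first_stage_rank: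
  assumes mono: "\<And>a s s'. H a s \<Longrightarrow> s \<le> s' \<Longrightarrow> H a s'"
    and fin: "finite {a. \<exists>s. H a s}" and accepted: "H a s"
  obtains m where "first_stage H m" "fst (prod_decode m) = a"
    "card ({..<m} \<inter> {i. first_stage H i}) < card {a. \<exists>s. H a s}"
proof
  let ?m = "prod_encode (a, LEAST s. H a s)"
  let ?F = "(\<lambda>a. prod_encode (a, LEAST s. H a s)) ` {a. \<exists>s. H a s}"
  have iff: "first_stage H i \<longleftrightarrow> i \<in> ?F" for i
    by (rule first_stage_iff) (use mono in blast)
  then have F: "{i. first_stage H i} = ?F" by blast
  show first: "first_stage H ?m" using iff accepted by blast
  show "fst (prod_decode ?m) = a" by simp
  have "{..<?m} \<inter> {i. first_stage H i} \<subset> ?F"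
    using first F by auto
  then have "card ({..<?m} \<inter> {i. first_stage H i}) < card ?F"
    using fin by (intro psubset_card_mono) auto
  also have "\<dots> \<le> card {a. \<exists>s. H a s}"
    using fin by (rule card_image_le)
  finally show "card ({..<?m} \<inter> {i. first_stage H i}) < card {a. \<exists>s. H a s}" .
qed

lemma card_first_stages_strict_mono:
  assumes "m' < m" "first_stage H m'"
  shows "card ({..<m'} \<inter> {i. first_stage H i}) < card ({..<m} \<inter> {i. first_stage H i})"
  using assms by (intro psubset_card_mono) auto

text \<open>The program run on the code \<open>W\<close> of \<open>\<langle>z, y\<rangle>\<close> dovetails the enumeration of
  \<open>{x. B x y \<le> |z| - d}\<close> by the program \<open>p\<close> and selects the element whose first stage comes
  at position \<open>horner_sum of_bool 2 z\<close>.\<close>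

definition enum_halted :: "recf \<Rightarrow> nat \<Rightarrow> nat \<Rightarrow> nat \<Rightarrow> nat \<Rightarrow> nat" where
  "enum_halted p d W a s =
    eval_clocked p s [prod_encode (a, prod_encode (parse_snd W, parse_len W - d))]"

definition enum_first :: "recf \<Rightarrow> nat \<Rightarrow> nat \<Rightarrow> nat \<Rightarrow> nat" where
  "enum_first p d W m =
    (if enum_halted p d W (fst (prod_decode m)) (snd (prod_decode m)) = 0 then 0
     else if snd (prod_decode m) = 0 then 1
     else if enum_halted p d W (fst (prod_decode m)) (snd (prod_decode m) - 1) = 0 then 1
     else 0)"

definition enum_select :: "recf \<Rightarrow> nat \<Rightarrow> nat \<Rightarrow> nat \<Rightarrow> nat" where
  "enum_select p d W m = (if enum_first p d W m = 1
     then (if (\<Sum>i<m. enum_first p d W i) = parse_val W then 0 else 1) else 1)"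

lemma enum_first_eq:
  "enum_first p d W m = of_bool (first_stage (\<lambda>a s. enum_halted p d W a s \<noteq> 0) m)"
  unfolding enum_first_def first_stage_def by (cases "prod_decode m") auto

lemma enum_select_eq_0:
  "enum_select p d W m = 0 \<longleftrightarrow> first_stage (\<lambda>a s. enum_halted p d W a s \<noteq> 0) m \<and>
    card ({..<m} \<inter> {i. first_stage (\<lambda>a s. enum_halted p d W a s \<noteq> 0) i}) = parse_val W"
  unfolding enum_select_def enum_first_eq by simp

lemma computable_enum_halted:
  "computable k W \<Longrightarrow> computable k A \<Longrightarrow> computable k S \<Longrightarrow>
    computable k (\<lambda>xs. enum_halted p d (W xs) (A xs) (S xs))"
proof -
  assume WAS: "computable k W" "computable k A" "computable k S"
  have query: "computable k
      (\<lambda>xs. prod_encode (A xs, prod_encode (parse_snd (W xs), parse_len (W xs) - d)))"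
    by (intro computable_prod_encode computable_parse_snd computable_diff computable_parse_len
        computable_const WAS)
  have "computable 2 (\<lambda>ys. eval_clocked p (hd ys) (tl ys))"
    using computable_eval_clocked[of 1 p] by (simp add: numeral_2_eq_2)
  from computable_comp2[OF this WAS(3) query] show ?thesis
    unfolding enum_halted_def by simp
qed

lemma computable_enum_first:
  "computable k W \<Longrightarrow> computable k M \<Longrightarrow> computable k (\<lambda>xs. enum_first p d (W xs) (M xs))"
  unfolding enum_first_def
  by (intro computable_if computable_enum_halted computable_fst_decode computable_snd_decode
      computable_diff computable_const computable_zero) assumption+

lemma computable_enum_select: "computable 2 (\<lambda>xs. enum_select p d (xs ! 1) (xs ! 0))"
proof -
  have "computable (Suc 2) (\<lambda>ys. enum_first p d (ys ! 2) (ys ! 0))"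
    by (intro computable_enum_first computable_nth) simp_all
  from computable_sum[OF this computable_nth[of 0 2]]
  have rank: "computable 2 (\<lambda>xs. \<Sum>i<xs ! 0. enum_first p d (xs ! 1) i)" by simp
  show ?thesis unfolding enum_select_def
    by (intro computable_if_eq computable_enum_first computable_nth rank computable_parse_val
        computable_const) simp_all
qed

lemma enumeration_program:
  "\<exists>P. \<forall>W m. enum_select p d W m = 0 \<longrightarrow> (\<forall>m'<m. enum_select p d W m' \<noteq> 0) \<longrightarrow>
    eval P [W] (fst (prod_decode m))"
proof -
  have "computable 2 (\<lambda>xs. fst (prod_decode (xs ! 0)))"
    by (intro computable_fst_decode computable_nth) simp
  from least_zero_program[OF computable_enum_select this] show ?thesis by simp
qed


definition query_halts :: "recf \<Rightarrow> bits \<Rightarrow> nat \<Rightarrow> nat \<Rightarrow> nat \<Rightarrow> bool" where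
  "query_halts p y n a s \<longleftrightarrow> eval_clocked p s [prod_encode (a, prod_encode (enc y, n))] \<noteq> 0"

lemma query_halts_mono: "query_halts p y n a s \<Longrightarrow> s \<le> s' \<Longrightarrow> query_halts p y n a s'"
  unfolding query_halts_def using eval_clocked_mono by (metis not0_implies_Suc)

lemma enum_select_spair:
  assumes "length z = n + d"
  shows "enum_select p d (enc (spair z y)) m = 0 \<longleftrightarrow> first_stage (query_halts p y n) m \<and>
    card ({..<m} \<inter> {i. first_stage (query_halts p y n) i}) = horner_sum of_bool 2 z"
proof -
  note parsed = parse_spair[OF refl, of z y]
  have "(\<lambda>a s. enum_halted p d (enc (spair z y)) a s \<noteq> 0) = query_halts p y n"
    unfolding enum_halted_def query_halts_def parsed assms by simp
  then show ?thesis unfolding enum_select_eq_0 parsed by simp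
qed

lemma halts_iff_sublevel:
  fixes B :: "bits \<Rightarrow> bits \<Rightarrow> nat"
  assumes p: "\<forall>c. c \<in> {prod_encode (enc x, prod_encode (enc y, k)) | x y k. B x y \<le> k} \<longleftrightarrow>
    (\<exists>v. eval p [c] v)"
  shows "(\<exists>s. query_halts p y n a s) \<longleftrightarrow> B (dec a) y \<le> n"
proof -
  have "prod_encode (a, prod_encode (enc y, n))
      \<in> {prod_encode (enc x, prod_encode (enc y, k)) | x y k. B x y \<le> k} \<longleftrightarrow> B (dec a) y \<le> n"
    (is "?c \<in> ?S \<longleftrightarrow> _")
  proof
    assume "?c \<in> ?S"
    then show "B (dec a) y \<le> n" by (auto dest: enc_inj)
  next
    assume "B (dec a) y \<le> n"
    then show "?c \<in> ?S" by (intro CollectI exI[of _ "dec a"] exI[of _ y] exI[of _ n]) simp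
  qed
  then show ?thesis using p halts_iff_eval_clocked unfolding query_halts_def by blast
qed

lemma accepted_queries_eq_image:
  fixes B :: "bits \<Rightarrow> bits \<Rightarrow> nat"
  assumes p: "\<forall>c. c \<in> {prod_encode (enc x, prod_encode (enc y, k)) | x y k. B x y \<le> k} \<longleftrightarrow>
    (\<exists>v. eval p [c] v)"
  shows "{a. \<exists>s. query_halts p y n a s} = enc ` {x. B x y \<le> n}"
proof (intro set_eqI iffI)
  fix a assume "a \<in> {a. \<exists>s. query_halts p y n a s}"
  then have "dec a \<in> {x. B x y \<le> n}" by (simp add: halts_iff_sublevel[OF p])
  then show "a \<in> enc ` {x. B x y \<le> n}" by (metis enc_dec image_eqI)
qed (auto simp: halts_iff_sublevel[OF p])

text \<open>The element \<open>x\<close> is selected by the string \<open>z\<close> of length \<open>n + d\<close> listing the binary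
  digits of the number of first stages preceding that of \<open>x\<close>.\<close>

lemma enumeration_program_describes:
  fixes B :: "bits \<Rightarrow> bits \<Rightarrow> nat"
  assumes p: "\<forall>c. c \<in> {prod_encode (enc x, prod_encode (enc y, k)) | x y k. B x y \<le> k} \<longleftrightarrow>
    (\<exists>v. eval p [c] v)"
    and fin: "finite {x. B x y \<le> n}" and card: "card {x. B x y \<le> n} \<le> 2 ^ (n + d)"
    and P: "\<forall>W m. enum_select p d W m = 0 \<longrightarrow> (\<forall>m'<m. enum_select p d W m' \<noteq> 0) \<longrightarrow>
      eval P [W] (fst (prod_decode m))"
    and x: "B x y \<le> n"
  shows "\<exists>z. length z = n + d \<and> eval P [enc (spair z y)] (enc x)"
proof -
  let ?H = "query_halts p y n"
  let ?rank = "\<lambda>m. card ({..<m} \<inter> {i. first_stage ?H i})"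
  have fin_H: "finite {a. \<exists>s. ?H a s}" and card_H: "card {a. \<exists>s. ?H a s} \<le> 2 ^ (n + d)"
    using fin card card_image_le[OF fin, of enc] accepted_queries_eq_image[OF p] by auto
  obtain s where s: "?H (enc x) s" using halts_iff_sublevel[OF p, of y n "enc x"] x by auto
  obtain m0 where m0: "first_stage ?H m0" "fst (prod_decode m0) = enc x"
    and rank: "?rank m0 < card {a. \<exists>s. ?H a s}"
    by (rule first_stage_rank[of ?H]) (use query_halts_mono fin_H s in auto)
  define z where "z = map (bit (?rank m0)) [0..<n + d]"
  have z: "length z = n + d" "horner_sum of_bool 2 z = ?rank m0"
    unfolding z_def horner_sum_bit_eq_take_bit using rank card_H
    by (simp_all add: take_bit_nat_eq_self order_less_le_trans)
  note select = enum_select_spair[OF z(1), of p y, unfolded z(2)]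
  have "enum_select p d (enc (spair z y)) m0 = 0" using select m0(1) by simp
  moreover have "enum_select p d (enc (spair z y)) m' \<noteq> 0" if "m' < m0" for m'
    using select card_first_stages_strict_mono[of m' m0 ?H] that by auto
  ultimately have "eval P [enc (spair z y)] (fst (prod_decode m0))" using P by blast
  with m0(2) z(1) show ?thesis by auto
qed

section \<open>Comparing B with C\<close>

lemma condC_le: "U (spair z y) = Some x \<Longrightarrow> condC U x y \<le> length z"
  unfolding condC_def by (rule Least_le) blast

lemma condC_witness:
  assumes "\<exists>z. U (spair z y) = Some x"
  obtains z where "U (spair z y) = Some x" "length z = condC U x y"
  using LeastI_ex[of "\<lambda>n. \<exists>z. U (spair z y) = Some x \<and> length z = n"] assms
  unfolding condC_def by blast

lemma optimal_machine_describes: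
  assumes "optimal_machine U"
  shows "\<exists>z. U (spair z y) = Some x"
proof -
  obtain T where T: "partial_computable T" "\<forall>z y. T (spair z y) = Some z"
    using spair_fst_machine by blast
  obtain c where "\<forall>x y z. T (spair z y) = Some x \<longrightarrow>
      (\<exists>z'. U (spair z' y) = Some x \<and> length z' \<le> length z + c)"
    using assms T(1) unfolding optimal_machine_def by blast
  then show ?thesis using T(2) by blast
qed

lemma B_le_condC_add:
  assumes U: "optimal_machine U"
    and length_bound: "\<forall>x y. B x y \<le> length x + c"
    and pairing: "\<forall>x y. B (spair x y) y \<le> B x y + e"
    and U_bound: "\<forall>x y z. U x = Some z \<longrightarrow> B z y \<le> B x y + c_U"
  shows "B x y \<le> condC U x y + (c + e + c_U)"
proof -
  obtain z where z: "U (spair z y) = Some x" "length z = condC U x y"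
    using condC_witness[OF optimal_machine_describes[OF U]] .
  have "B x y \<le> B (spair z y) y + c_U" using U_bound z(1) by blast
  also have "\<dots> \<le> B z y + e + c_U" using pairing by simp
  also have "\<dots> \<le> length z + c + e + c_U" using length_bound by simp
  finally show ?thesis using z(2) by simp
qed

lemma condC_le_B_add:
  fixes B :: "bits \<Rightarrow> bits \<Rightarrow> nat"
  assumes U: "optimal_machine U" and B: "upper_semicomputable B"
    and sublevel: "\<forall>y n. finite {x. B x y \<le> n} \<and> card {x. B x y \<le> n} \<le> d * 2 ^ n"
  shows "\<exists>c. \<forall>x y. condC U x y \<le> B x y + c"
proof -
  obtain p where p: "\<forall>c. c \<in> {prod_encode (enc x, prod_encode (enc y, k)) | x y k. B x y \<le> k} \<longleftrightarrow>
      (\<exists>v. eval p [c] v)"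
    using B unfolding upper_semicomputable_def ce_def by blast
  obtain P where P: "\<forall>W m. enum_select p d W m = 0 \<longrightarrow> (\<forall>m'<m. enum_select p d W m' \<noteq> 0) \<longrightarrow>
      eval P [W] (fst (prod_decode m))"
    using enumeration_program by blast
  obtain c where c: "\<forall>x y z. machine_of P (spair z y) = Some x \<longrightarrow>
      (\<exists>z'. U (spair z' y) = Some x \<and> length z' \<le> length z + c)"
    using U partial_computable_machine_of[of P] unfolding optimal_machine_def by blast
  have "condC U x y \<le> B x y + (d + c)" for x y
  proof -
    have "card {x'. B x' y \<le> B x y} \<le> d * 2 ^ B x y" using sublevel by blast
    also have "\<dots> \<le> 2 ^ d * 2 ^ B x y" using less_exp[of d] by simp
    finally have "card {x'. B x' y \<le> B x y} \<le> 2 ^ (B x y + d)"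
      by (simp add: power_add mult.commute)
    with enumeration_program_describes[OF p _ _ P] sublevel
    obtain z where "length z = B x y + d" "eval P [enc (spair z y)] (enc x)" by blast
    then have "machine_of P (spair z y) = Some x" "length z = B x y + d"
      using machine_of_eval by fastforce+
    with c obtain z' where "U (spair z' y) = Some x" "length z' \<le> B x y + d + c" by fastforce
    then show ?thesis using condC_le[of U z' y x] by simp
  qed
  then show ?thesis by blast
qed

theorem theorem5:
  fixes U :: "bits \<Rightarrow> bits option" and B :: "bits \<Rightarrow> bits \<Rightarrow> nat"
  assumes U: "optimal_machine U"
    and h1: "upper_semicomputable B"
    and h2: "\<exists>c::nat. \<forall>x y. B x y \<le> length x + c"
    and h3: "\<exists>d::nat. \<forall>y n. finite {x. B x y \<le> n} \<and> card {x. B x y \<le> n} \<le> d * 2 ^ n"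
    and h4: "\<exists>e::nat. \<forall>x y. B (spair x y) y \<le> B x y + e"
    and h5: "\<forall>f. partial_computable f \<longrightarrow>
               (\<exists>cf::nat. \<forall>x y z. f x = Some z \<longrightarrow> B z y \<le> B x y + cf)"
  shows "\<exists>c'::nat. \<forall>x y. \<bar>int (B x y) - int (condC U x y)\<bar> \<le> int c'"
proof -
  obtain c where c: "\<forall>x y. B x y \<le> length x + c" using h2 by blast
  obtain e where e: "\<forall>x y. B (spair x y) y \<le> B x y + e" using h4 by blast
  have "partial_computable U" using U unfolding optimal_machine_def by blast
  then obtain c_U where c_U: "\<forall>x y z. U x = Some z \<longrightarrow> B z y \<le> B x y + c_U"
    using h5 by blast
  obtain d where "\<forall>y n. finite {x. B x y \<le> n} \<and> card {x. B x y \<le> n} \<le> d * 2 ^ n"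
    using h3 by blast
  then obtain c' where lower: "\<forall>x y. condC U x y \<le> B x y + c'"
    using condC_le_B_add[OF U h1] by blast
  have "\<bar>int (B x y) - int (condC U x y)\<bar> \<le> int (c + e + c_U + c')" for x y
    using B_le_condC_add[OF U c e c_U, of x y] lower[rule_format, of x y] by linarith
  then show ?thesis by blast
qed

end
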